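(* Let $n\ge 2$ and let $R$ be the complex Leibniz algebra with basis $\{h,e_1,\dots,e_n\}$ and nonzero products $[e_i,e_1]=e_{i+1}$ ($1\le i\le n-1$), $[h,e_1]=-e_1$, $[e_i,h]=ie_i$ ($1\le i\le n$). A linear map $D:R\to R$ is an anti-derivation iff there exist $\beta_1,\dots,\beta_{n+1}\in\mathbb C$ such that $$D(h)=\sum_{i=1}^{n-1}i\beta_{i+1}e_i+\beta_{n+1}e_n,\qquad D(e_1)=\sum_{i=1}^n\beta_ie_i,\qquad D(e_i)=0\ (2\le i\le n).$$
   Context: Leibniz algebras are right Leibniz over $\mathbb C$: $[x,[y,z]]=[[x,y],z]-[[x,z],y]$. Unlisted products are zero. An anti-derivation is a linear map $D$ with $D([x,y])=[D(x),y]-[D(y),x]$ for all $x,y$. *)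

theory Defs
  imports Complex_Main "HOL-Library.Function_Algebras"
begin

text \<open>The Leibniz algebra R (dimension n+1 over the complex numbers).
 Elements are coordinate vectors v :: nat => complex supported on {0..n};
 index 0 is h, index i (1 <= i <= n) is e_i.\<close>

definition carrierR :: "nat \<Rightarrow> (nat \<Rightarrow> complex) set" where
  "carrierR n = {v. \<forall>k>n. v k = 0}"

definition bv :: "nat \<Rightarrow> nat \<Rightarrow> complex" where
  "bv i = (\<lambda>k. if k = i then 1 else 0)"

definition vsc :: "complex \<Rightarrow> (nat \<Rightarrow> complex) \<Rightarrow> nat \<Rightarrow> complex" where
  "vsc c v = (\<lambda>k. c * v k)"

definition bprod :: "nat \<Rightarrow> nat \<Rightarrow> nat \<Rightarrow> nat \<Rightarrow> complex" where
  "bprod n i j =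
     (if 1 \<le> i \<and> i \<le> n - 1 \<and> j = 1 then bv (i + 1)
      else if i = 0 \<and> j = 1 then vsc (-1) (bv 1)
      else if 1 \<le> i \<and> i \<le> n \<and> j = 0 then vsc (of_nat i) (bv i)
      else (\<lambda>k. 0))"

definition brR :: "nat \<Rightarrow> (nat \<Rightarrow> complex) \<Rightarrow> (nat \<Rightarrow> complex) \<Rightarrow> nat \<Rightarrow> complex" where
  "brR n x y = (\<Sum>i\<le>n. \<Sum>j\<le>n. vsc (x i * y j) (bprod n i j))"

definition linear_on_R :: "nat \<Rightarrow> ((nat \<Rightarrow> complex) \<Rightarrow> nat \<Rightarrow> complex) \<Rightarrow> bool" where
  "linear_on_R n D \<longleftrightarrow>
     (\<forall>x\<in>carrierR n. D x \<in> carrierR n) \<and>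
     (\<forall>x\<in>carrierR n. \<forall>y\<in>carrierR n. D (x + y) = D x + D y) \<and>
     (\<forall>c. \<forall>x\<in>carrierR n. D (vsc c x) = vsc c (D x))"

definition anti_derivation :: "nat \<Rightarrow> ((nat \<Rightarrow> complex) \<Rightarrow> nat \<Rightarrow> complex) \<Rightarrow> bool" where
  "anti_derivation n D \<longleftrightarrow>
     (\<forall>x\<in>carrierR n. \<forall>y\<in>carrierR n.
        D (brR n x y) = brR n (D x) y - brR n (D y) x)"

end

theory Submission
  imports Defs
begin

text \<open>Both sides of the anti-derivation identity are bilinear, and right multiplication
  by \<open>e\<^sub>i\<close> vanishes for \<open>i \<ge> 2\<close>. From \<open>e\<^sub>2 = [e\<^sub>1, e\<^sub>1]\<close> and
  \<open>e\<^sub>i\<^sub>+\<^sub>1 = [e\<^sub>i, e\<^sub>1]\<close> one gets \<open>D e\<^sub>i = 0\<close> for \<open>i \<ge> 2\<close>, so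
  \<open>D x = x\<^sub>0 D h + x\<^sub>1 D e\<^sub>1\<close>. For such \<open>D\<close> the identity at arbitrary \<open>x, y\<close> is
  the identity at the pair \<open>(e\<^sub>1, h)\<close> multiplied by \<open>x\<^sub>1 y\<^sub>0 - x\<^sub>0 y\<^sub>1\<close>.
  In coordinates that single identity \<open>D e\<^sub>1 = [D e\<^sub>1, h] - [D h, e\<^sub>1]\<close> says
  \<open>(D h)\<^sub>0 = (D e\<^sub>1)\<^sub>0 = 0\<close> and \<open>(D h)\<^sub>k = k (D e\<^sub>1)\<^sub>k\<^sub>+\<^sub>1\<close> for \<open>1 \<le> k < n\<close>,
  which is the stated parametrisation with \<open>\<beta>\<^sub>n\<^sub>+\<^sub>1 = (D h)\<^sub>n\<close>.\<close>

lemma sum_fun_apply: "(\<Sum>i\<in>A. f i) x = (\<Sum>i\<in>A. f i x)"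
  by (induction A rule: infinite_finite_induct) auto

lemma sum_vsc_bv_apply:
  assumes "finite S"
  shows "(\<Sum>i\<in>S. vsc (c i) (bv i)) k = (if k \<in> S then c k else 0)"
  using assms by (simp add: sum_fun_apply vsc_def bv_def if_distrib[of "\<lambda>z. c _ * z"] cong: if_cong)

lemma bv_in_carrierR: "i \<le> n \<Longrightarrow> bv i \<in> carrierR n"
  by (simp add: carrierR_def bv_def)

lemma vsc_in_carrierR: "x \<in> carrierR n \<Longrightarrow> vsc c x \<in> carrierR n"
  by (simp add: carrierR_def vsc_def)

lemma sum_in_carrierR: "(\<And>i. i \<in> S \<Longrightarrow> x i \<in> carrierR n) \<Longrightarrow> (\<Sum>i\<in>S. x i) \<in> carrierR n"
  by (induction S rule: infinite_finite_induct) (auto simp: carrierR_def)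

lemma carrierR_eq_sum_bv: "x \<in> carrierR n \<Longrightarrow> x = (\<Sum>i\<le>n. vsc (x i) (bv i))"
  by (auto simp: fun_eq_iff sum_vsc_bv_apply carrierR_def)

lemma bprod_eq_0: "2 \<le> j \<Longrightarrow> bprod n i j = 0"
  by (simp add: bprod_def zero_fun_def)

lemma sum_bprod_e1:
  "(\<Sum>i\<le>n. x i * bprod n i 1 k) = (if k = 1 then - x 0 else if 2 \<le> k \<and> k \<le> n then x (k - 1) else 0)"
proof -
  have "x i * bprod n i 1 k =
      (if i = 0 then (if k = 1 then - x 0 else 0) else 0)
    + (if i = k - 1 then (if 2 \<le> k \<and> k \<le> n then x (k - 1) else 0) else 0)" for i
    by (auto simp: bprod_def bv_def vsc_def)
  then show ?thesis by (auto simp: sum.distrib)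
qed

lemma sum_bprod_h:
  "(\<Sum>i\<le>n. x i * bprod n i 0 k) = (if 1 \<le> k \<and> k \<le> n then of_nat k * x k else 0)"
proof -
  have "x i * bprod n i 0 k = (if i = k then (if 1 \<le> k \<and> k \<le> n then of_nat k * x k else 0) else 0)" for i
    by (auto simp: bprod_def bv_def vsc_def)
  then show ?thesis by simp
qed

lemma brR_eq_right_mult:
  assumes "n \<ge> 1"
  shows "brR n x y k = y 1 * (\<Sum>i\<le>n. x i * bprod n i 1 k) + y 0 * (\<Sum>i\<le>n. x i * bprod n i 0 k)"
proof -
  have "(\<Sum>j\<le>n. x i * y j * bprod n i j k) = (\<Sum>j\<in>{0, 1}. x i * y j * bprod n i j k)" for i
    using assms by (intro sum.mono_neutral_right) (auto simp: bprod_eq_0)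
  then show ?thesis
    by (simp add: brR_def sum_fun_apply vsc_def sum.distrib sum_distrib_left algebra_simps)
qed

lemma brR_apply:
  assumes "n \<ge> 1"
  shows "brR n x y k = (if k = 1 then x 1 * y 0 - x 0 * y 1
     else if 2 \<le> k \<and> k \<le> n then x (k - 1) * y 1 + of_nat k * x k * y 0 else 0)"
  unfolding brR_eq_right_mult[OF assms] sum_bprod_e1 sum_bprod_h using assms by auto

lemma brR_in_carrierR: "n \<ge> 1 \<Longrightarrow> brR n x y \<in> carrierR n"
  by (simp add: carrierR_def brR_apply)

lemma brR_bv_e1: "1 \<le> i \<Longrightarrow> i < n \<Longrightarrow> brR n (bv i) (bv 1) = bv (i + 1)"
  by (auto simp: fun_eq_iff brR_apply bv_def)

lemma brR_e1_h: "n \<ge> 1 \<Longrightarrow> brR n (bv 1) (bv 0) = bv 1"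
  by (auto simp: fun_eq_iff brR_apply bv_def)

lemma brR_right_decompose:
  "n \<ge> 1 \<Longrightarrow> brR n x y = vsc (y 0) (brR n x (bv 0)) + vsc (y 1) (brR n x (bv 1))"
  by (simp add: fun_eq_iff brR_apply bv_def vsc_def algebra_simps)

lemma brR_left_linear:
  "n \<ge> 1 \<Longrightarrow> brR n (vsc a x + vsc b z) y = vsc a (brR n x y) + vsc b (brR n z y)"
  by (simp add: fun_eq_iff brR_apply vsc_def algebra_simps)

lemma linear_on_R_zero:
  assumes "linear_on_R n D"
  shows "D 0 = 0"
proof -
  have "D 0 = D (vsc 0 0)" by (simp add: vsc_def zero_fun_def)
  also have "\<dots> = vsc 0 (D 0)"
    using assms by (simp add: linear_on_R_def carrierR_def)
  finally show ?thesis by (simp add: vsc_def zero_fun_def)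
qed

lemma linear_on_R_sum:
  assumes "linear_on_R n D" and "finite S" and "\<And>i. i \<in> S \<Longrightarrow> x i \<in> carrierR n"
  shows "D (\<Sum>i\<in>S. x i) = (\<Sum>i\<in>S. D (x i))"
  using assms(2,3)
proof (induction S rule: finite_induct)
  case empty
  show ?case using linear_on_R_zero[OF assms(1)] by (simp only: sum.empty)
next
  case (insert a S)
  have "D (\<Sum>i\<in>insert a S. x i) = D (x a + (\<Sum>i\<in>S. x i))"
    using insert(1,2) by simp
  also have "\<dots> = D (x a) + D (\<Sum>i\<in>S. x i)"
    using assms(1) insert(4) sum_in_carrierR[of S x n] by (simp add: linear_on_R_def)
  also have "\<dots> = (\<Sum>i\<in>insert a S. D (x i))"
    using insert by simp
  finally show ?case .
qed

lemma linear_on_R_apply: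
  assumes "linear_on_R n D" and "x \<in> carrierR n"
  shows "D x k = (\<Sum>i\<le>n. x i * D (bv i) k)"
proof -
  have "D x = (\<Sum>i\<le>n. D (vsc (x i) (bv i)))"
    by (subst carrierR_eq_sum_bv[OF assms(2)], rule linear_on_R_sum[OF assms(1)])
       (auto intro: vsc_in_carrierR bv_in_carrierR)
  also have "\<dots> = (\<Sum>i\<le>n. vsc (x i) (D (bv i)))"
    using assms(1) bv_in_carrierR by (simp add: linear_on_R_def)
  finally show ?thesis by (simp add: sum_fun_apply vsc_def)
qed

lemma linear_on_R_eq_h_e1:
  assumes "linear_on_R n D" and "n \<ge> 1" and "\<And>i. 2 \<le> i \<Longrightarrow> i \<le> n \<Longrightarrow> D (bv i) = 0"
    and "x \<in> carrierR n"
  shows "D x = vsc (x 0) (D (bv 0)) + vsc (x 1) (D (bv 1))"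
proof
  fix k
  have "D x k = (\<Sum>i\<in>{0, 1}. x i * D (bv i) k)"
    unfolding linear_on_R_apply[OF assms(1,4)]
    using assms(2,3) by (intro sum.mono_neutral_right) auto
  then show "D x k = (vsc (x 0) (D (bv 0)) + vsc (x 1) (D (bv 1))) k"
    by (simp add: vsc_def)
qed

lemma anti_derivation_bv_eq_0:
  assumes "anti_derivation n D" and "2 \<le> i" and "i \<le> n"
  shows "D (bv i) = 0"
  using assms(2,3)
proof (induction i rule: nat_induct_at_least)
  case base
  have "D (bv 2) = D (brR n (bv 1) (bv 1))"
    using brR_bv_e1[of 1 n] base by (simp add: numeral_2_eq_2)
  also have "\<dots> = 0"
    using assms(1) base bv_in_carrierR[of 1 n] by (simp add: anti_derivation_def)
  finally show ?case .
next
  case (Suc i)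
  have "D (bv (Suc i)) = D (brR n (bv i) (bv 1))"
    using brR_bv_e1[of i n] Suc by simp
  also have "\<dots> = brR n (D (bv i)) (bv 1) - brR n (D (bv 1)) (bv i)"
    using assms(1) Suc bv_in_carrierR[of _ n] by (simp add: anti_derivation_def)
  also have "\<dots> = 0"
    using Suc by (simp add: fun_eq_iff brR_apply bv_def)
  finally show ?case .
qed

lemma anti_derivation_iff_basis:
  assumes "n \<ge> 1" and "linear_on_R n D"
  shows "anti_derivation n D \<longleftrightarrow>
    (\<forall>i. 2 \<le> i \<and> i \<le> n \<longrightarrow> D (bv i) = 0) \<and>
    D (bv 1) = brR n (D (bv 1)) (bv 0) - brR n (D (bv 0)) (bv 1)"
proof
  assume ad: "anti_derivation n D"
  have "D (bv 1) = D (brR n (bv 1) (bv 0))"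
    using brR_e1_h[OF assms(1)] by simp
  also have "\<dots> = brR n (D (bv 1)) (bv 0) - brR n (D (bv 0)) (bv 1)"
    using ad assms(1) bv_in_carrierR[of _ n] by (simp add: anti_derivation_def)
  finally show "(\<forall>i. 2 \<le> i \<and> i \<le> n \<longrightarrow> D (bv i) = 0) \<and>
      D (bv 1) = brR n (D (bv 1)) (bv 0) - brR n (D (bv 0)) (bv 1)"
    using anti_derivation_bv_eq_0[OF ad] by blast
next
  assume "(\<forall>i. 2 \<le> i \<and> i \<le> n \<longrightarrow> D (bv i) = 0) \<and>
      D (bv 1) = brR n (D (bv 1)) (bv 0) - brR n (D (bv 0)) (bv 1)"
  then have vanish: "\<And>i. 2 \<le> i \<Longrightarrow> i \<le> n \<Longrightarrow> D (bv i) = 0"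
    and e1_h: "D (bv 1) = brR n (D (bv 1)) (bv 0) - brR n (D (bv 0)) (bv 1)"
    by auto
  define a0 a1 where "a0 = D (bv 0)" and "a1 = D (bv 1)"
  have D_eq: "D x = vsc (x 0) a0 + vsc (x 1) a1" if "x \<in> carrierR n" for x
    unfolding a0_def a1_def by (rule linear_on_R_eq_h_e1[OF assms(2,1) vanish that])
  show "anti_derivation n D"
    unfolding anti_derivation_def
  proof (intro ballI)
    fix x y assume x: "x \<in> carrierR n" and y: "y \<in> carrierR n"
    have "D (brR n x y) = vsc (x 1 * y 0 - x 0 * y 1) a1"
      using assms(1) by (simp add: D_eq brR_in_carrierR) (simp add: fun_eq_iff brR_apply vsc_def)
    also have "\<dots> = vsc (x 1 * y 0 - x 0 * y 1) (brR n a1 (bv 0) - brR n a0 (bv 1))"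
      using e1_h by (simp add: a0_def a1_def)
    also have "\<dots> = brR n (D x) y - brR n (D y) x"
      unfolding D_eq[OF x] D_eq[OF y] brR_left_linear[OF assms(1)]
        brR_right_decompose[OF assms(1), of a0 x] brR_right_decompose[OF assms(1), of a0 y]
        brR_right_decompose[OF assms(1), of a1 x] brR_right_decompose[OF assms(1), of a1 y]
      by (simp add: fun_eq_iff vsc_def algebra_simps)
    finally show "D (brR n x y) = brR n (D x) y - brR n (D y) x" .
  qed
qed

lemma e1_h_identity_iff_coords:
  assumes "n \<ge> 1" and "a0 \<in> carrierR n" and "a1 \<in> carrierR n"
  shows "a1 = brR n a1 (bv 0) - brR n a0 (bv 1) \<longleftrightarrow>
    a0 0 = 0 \<and> a1 0 = 0 \<and> (\<forall>k. 1 \<le> k \<and> k < n \<longrightarrow> a0 k = of_nat k * a1 (k + 1))"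
    (is "_ \<longleftrightarrow> ?coords")
proof -
  have rhs: "(brR n a1 (bv 0) - brR n a0 (bv 1)) k =
      (if k = 1 then a1 1 + a0 0 else if 2 \<le> k \<and> k \<le> n then of_nat k * a1 k - a0 (k - 1) else 0)"
    for k
    using assms(1) by (simp add: brR_apply bv_def)
  have "a1 = brR n a1 (bv 0) - brR n a0 (bv 1) \<longleftrightarrow>
      (\<forall>k. a1 k = (if k = 1 then a1 1 + a0 0
                   else if 2 \<le> k \<and> k \<le> n then of_nat k * a1 k - a0 (k - 1) else 0))"
    (is "_ \<longleftrightarrow> (\<forall>k. a1 k = ?r k)")
    by (simp only: fun_eq_iff rhs)
  also have "\<dots> \<longleftrightarrow> ?coords"
  proof
    assume eqs: "\<forall>k. a1 k = ?r k"
    have "a0 k = of_nat k * a1 (k + 1)" if "1 \<le> k" "k < n" for k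
      using spec[OF eqs, of "k + 1"] that by (simp add: algebra_simps)
    with spec[OF eqs, of 0] spec[OF eqs, of 1] show ?coords by simp
  next
    assume coords: ?coords
    have shift: "a0 (k - 1) = (of_nat k - 1) * a1 k" if "2 \<le> k" "k \<le> n" for k
    proof -
      have "1 \<le> k - 1" and "k - 1 < n"
        using that by auto
      with coords have "a0 (k - 1) = of_nat (k - 1) * a1 (k - 1 + 1)"
        by blast
      with that show ?thesis by (simp add: of_nat_diff)
    qed
    show "\<forall>k. a1 k = ?r k"
    proof
      fix k
      consider "k = 0" | "k = 1" | "2 \<le> k" "k \<le> n" | "n < k"
        by linarith
      then show "a1 k = ?r k"
        using coords assms(3) shift[of k] by cases (auto simp: carrierR_def algebra_simps)
    qed
  qed
  finally show ?thesis .
qed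

lemma beta_form_iff_coords:
  assumes "n \<ge> 1" and "a0 \<in> carrierR n" and "a1 \<in> carrierR n"
  shows "(\<exists>\<beta>. a0 = (\<Sum>i=1..n-1. vsc (of_nat i * \<beta> (i + 1)) (bv i)) + vsc (\<beta> (n + 1)) (bv n) \<and>
              a1 = (\<Sum>i=1..n. vsc (\<beta> i) (bv i))) \<longleftrightarrow>
    a0 0 = 0 \<and> a1 0 = 0 \<and> (\<forall>k. 1 \<le> k \<and> k < n \<longrightarrow> a0 k = of_nat k * a1 (k + 1))"
    (is "(\<exists>\<beta>. a0 = ?h \<beta> \<and> a1 = ?e \<beta>) \<longleftrightarrow> ?coords")
proof -
  have h_apply: "?h \<beta> k = (if 1 \<le> k \<and> k < n then of_nat k * \<beta> (k + 1) else if k = n then \<beta> (n + 1) else 0)"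
    for \<beta> k
    unfolding plus_fun_apply sum_vsc_bv_apply[OF finite_atLeastAtMost]
    using assms(1) by (auto simp: vsc_def bv_def)
  have e_apply: "?e \<beta> k = (if 1 \<le> k \<and> k \<le> n then \<beta> k else 0)" for \<beta> k
    by (simp add: sum_vsc_bv_apply)
  show ?thesis
  proof
    assume "\<exists>\<beta>. a0 = ?h \<beta> \<and> a1 = ?e \<beta>"
    then obtain \<beta> where a0: "a0 = ?h \<beta>" and a1: "a1 = ?e \<beta>"
      by blast
    show ?coords
      unfolding a0 a1 h_apply e_apply using assms(1) by simp
  next
    assume coords: ?coords
    define \<beta> where "\<beta> i = (if i = n + 1 then a0 n else a1 i)" for i
    have "a0 = ?h \<beta>"
      unfolding fun_eq_iff h_apply using coords assms(2) by (auto simp: \<beta>_def carrierR_def Suc_le_eq)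
    moreover have "a1 = ?e \<beta>"
      unfolding fun_eq_iff e_apply using coords assms(3) by (auto simp: \<beta>_def carrierR_def Suc_le_eq)
    ultimately show "\<exists>\<beta>. a0 = ?h \<beta> \<and> a1 = ?e \<beta>"
      by blast
  qed
qed

theorem mainTheorem7:
  fixes n :: nat and D :: "(nat \<Rightarrow> complex) \<Rightarrow> nat \<Rightarrow> complex"
  assumes "n \<ge> 2" and "linear_on_R n D"
  shows "anti_derivation n D \<longleftrightarrow>
    (\<exists>\<beta> :: nat \<Rightarrow> complex.
       D (bv 0) = (\<Sum>i=1..n-1. vsc (of_nat i * \<beta> (i + 1)) (bv i)) + vsc (\<beta> (n + 1)) (bv n) \<and>
       D (bv 1) = (\<Sum>i=1..n. vsc (\<beta> i) (bv i)) \<and>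
       (\<forall>i. 2 \<le> i \<and> i \<le> n \<longrightarrow> D (bv i) = (\<lambda>k. 0)))"
proof -
  have n: "n \<ge> 1"
    using assms(1) by simp
  have carrier: "D (bv 0) \<in> carrierR n" "D (bv 1) \<in> carrierR n"
    using assms(2) n bv_in_carrierR[of _ n] by (auto simp: linear_on_R_def)
  show ?thesis
    unfolding anti_derivation_iff_basis[OF n assms(2)] e1_h_identity_iff_coords[OF n carrier]
      beta_form_iff_coords[OF n carrier, symmetric]
    by (auto simp: zero_fun_def)
qed

end
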